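(* Let $\mathsf A_1,\dots,\mathsf A_n$ be incompatible observables on a finite-dimensional Hilbert space with $m_1,\dots,m_n$ outcomes respectively. Then $$\chi_{incomp}(\mathsf A_1,\dots,\mathsf A_n)\le\sum_{j=1}^nm_j-n+1.$$
   Context: Observables are POVMs with finitely many outcomes on a $d$-dimensional Hilbert space; $\mathcal S$ is its set of density operators. Observables are compatible if there is a joint observable $\mathsf G$ on the product outcome set whose marginals $\sum_{x_l,l\neq j}\mathsf G(x_1,\dots,x_n)$ equal $\mathsf A_j(x_j)$; otherwise incompatible. For $\mathcal S_0\subset\mathcal S$ they are $\mathcal S_0$-compatible if there are compatible observables $\mathsf A'_j$ (same outcome sets) with $\mathrm{Tr}[\varrho\mathsf A'_j(x)]=\mathrm{Tr}[\varrho\mathsf A_j(x)]$ for all $j,x$ and $\varrho\in\mathcal S_0$; otherwise $\mathcal S_0$-incompatible. $\chi_{incomp}(\mathsf A_1,\dots,\mathsf A_n)=\min\{\dim\mathrm{aff}\mathcal S_0+1:\mathcal S_0\subset\mathcal S,\ \mathsf A_1,\dots,\mathsf A_n\ \mathcal S_0\text{-incompatible}\}$. *)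

theory Defs
  imports "HOL-Analysis.Analysis"
begin

text \<open>Operators on a d-dimensional complex Hilbert space are d x d complex matrices,
  with d = CARD('d) for a finite index type 'd.\<close>

definition psd :: "complex^'d^'d \<Rightarrow> bool" where
  "psd M \<longleftrightarrow> (\<forall>v :: complex^'d.
     let q = (\<Sum>i\<in>UNIV. cnj (v $ i) * (M *v v) $ i) in Im q = 0 \<and> 0 \<le> Re q)"

definition is_observable :: "('o \<Rightarrow> complex^'d^'d) \<Rightarrow> 'o set \<Rightarrow> bool" where
  "is_observable E Om \<longleftrightarrow> finite Om \<and> (\<forall>x\<in>Om. psd (E x)) \<and> (\<Sum>x\<in>Om. E x) = mat 1"

definition density_ops :: "(complex^'d^'d) set" where
  "density_ops = {\<rho>. psd \<rho> \<and> trace \<rho> = 1}"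

text \<open>Observables A 0, ..., A (n-1), where A j has outcome set Om j.\<close>
definition compatible :: "nat \<Rightarrow> (nat \<Rightarrow> 'o set) \<Rightarrow> (nat \<Rightarrow> 'o \<Rightarrow> complex^'d^'d) \<Rightarrow> bool" where
  "compatible n Om A \<longleftrightarrow>
     (\<exists>G. is_observable G (PiE {..<n} Om) \<and>
          (\<forall>j<n. \<forall>x\<in>Om j. (\<Sum>g\<in>{g\<in>PiE {..<n} Om. g j = x}. G g) = A j x))"

definition S0_compatible :: "(complex^'d^'d) set \<Rightarrow> nat \<Rightarrow> (nat \<Rightarrow> 'o set) \<Rightarrow> (nat \<Rightarrow> 'o \<Rightarrow> complex^'d^'d) \<Rightarrow> bool" where
  "S0_compatible S0 n Om A \<longleftrightarrow>
     (\<exists>A'. (\<forall>j<n. is_observable (A' j) (Om j)) \<and> compatible n Om A' \<and>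
          (\<forall>j<n. \<forall>x\<in>Om j. \<forall>\<rho>\<in>S0. trace (\<rho> ** A' j x) = trace (\<rho> ** A j x)))"

text \<open>aff_dim is the dimension of the real affine hull (matrices viewed as a real vector space).\<close>
definition chi_incomp :: "nat \<Rightarrow> (nat \<Rightarrow> 'o set) \<Rightarrow> (nat \<Rightarrow> 'o \<Rightarrow> complex^'d^'d) \<Rightarrow> int" where
  "chi_incomp n Om A = Inf {aff_dim S0 + 1 | S0 :: (complex^'d^'d) set.
       S0 \<subseteq> density_ops \<and> \<not> S0_compatible S0 n Om A}"

end

theory Submission
  imports Defs
begin

text \<open>
  Incompatibility says that the tuple \<open>(A\<^sub>j(x))\<close> lies outside the compact convex set of
  marginal tuples of joint observables. Its residual \<open>h = A - B\<close> with respect to the closest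
  such tuple \<open>B\<close> is Hermitian, and the linear functional \<open>\<langle>h, -\<rangle>\<close> is strictly larger at
  \<open>A\<close> than at every compatible tuple. On families of observables this functional depends, up to
  a constant, only on the numbers \<open>tr (D\<^sub>j(x) X\<^sub>j(x))\<close> with \<open>D\<^sub>j(x) = h\<^sub>j(x) - h\<^sub>j(x\<^sub>j)\<close>
  for a fixed outcome \<open>x\<^sub>j\<close> and the \<open>\<Sum>\<^sub>j (m\<^sub>j - 1)\<close> outcomes \<open>x \<noteq> x\<^sub>j\<close>. For Hermitian
  \<open>D\<close> the normalisation of \<open>1 + t D\<close>, \<open>t > 0\<close> small, is a state whose expectations are an
  affine combination of \<open>tr X\<close> and \<open>tr (D X)\<close> with a nonzero coefficient at \<open>tr (D X)\<close>.
  These states and the maximally mixed state form a set \<open>S\<^sub>0\<close> of at most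
  \<open>\<Sum>\<^sub>j m\<^sub>j - n + 1\<close> states. Observables with the same statistics as the \<open>A\<^sub>j\<close> on \<open>S\<^sub>0\<close>
  give the functional the same value as \<open>A\<close>, so they are incompatible, and
  \<open>\<chi> \<le> dim aff S\<^sub>0 + 1 \<le> |S\<^sub>0|\<close>.
\<close>

section \<open>Sesquilinear forms and positive semidefinite matrices\<close>

definition sesq_form :: "complex^'d^'d \<Rightarrow> complex^'d \<Rightarrow> complex^'d \<Rightarrow> complex" where
  "sesq_form M u w = (\<Sum>a\<in>UNIV. \<Sum>b\<in>UNIV. cnj (u$a) * M$a$b * w$b)"

lemma psd_iff_sesq_form:
  "psd M \<longleftrightarrow> (\<forall>v. Im (sesq_form M v v) = 0 \<and> 0 \<le> Re (sesq_form M v v))"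
proof -
  have "(\<Sum>i\<in>UNIV. cnj (v $ i) * (M *v v) $ i) = sesq_form M v v" for v
    by (simp add: sesq_form_def matrix_vector_mult_def sum_distrib_left mult.assoc)
  then show ?thesis
    unfolding psd_def Let_def by simp
qed

lemma sesq_form_add_matrix: "sesq_form (M + N) u w = sesq_form M u w + sesq_form N u w"
  by (simp add: sesq_form_def ring_distribs sum.distrib)

lemma sesq_form_sum_matrix: "sesq_form (\<Sum>g\<in>S. F g) u w = (\<Sum>g\<in>S. sesq_form (F g) u w)"
  by (simp add: sesq_form_def sum_distrib_left sum_distrib_right sum.swap[of _ S])

lemma sesq_form_scaleR_matrix: "sesq_form (c *\<^sub>R M) u w = of_real c * sesq_form M u w"
  unfolding sesq_form_def sum_distrib_left
  unfolding vector_scaleR_component unfolding scaleR_conv_of_real by (simp add: algebra_simps)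

lemma sesq_form_mat_1: "sesq_form (mat 1) v v = of_real (\<Sum>a\<in>UNIV. (cmod (v$a))\<^sup>2)"
proof -
  have "sesq_form (mat 1) v v = (\<Sum>a\<in>UNIV. cnj (v$a) * v$a)"
    by (simp add: sesq_form_def mat_def if_distrib if_distribR cong: if_cong)
  also have "\<dots> = (\<Sum>a\<in>UNIV. of_real ((cmod (v$a))\<^sup>2))"
    by (rule sum.cong, simp, metis complex_norm_square mult.commute of_real_power)
  finally show ?thesis
    by simp
qed

lemma sesq_form_add_left: "sesq_form M (u + u') w = sesq_form M u w + sesq_form M u' w"
  by (simp add: sesq_form_def ring_distribs sum.distrib)

lemma sesq_form_add_right: "sesq_form M u (w + w') = sesq_form M u w + sesq_form M u w'"
  by (simp add: sesq_form_def ring_distribs sum.distrib)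

lemma sesq_form_scale_left: "sesq_form M (c *s u) w = cnj c * sesq_form M u w"
  by (simp add: sesq_form_def sum_distrib_left mult.assoc)

lemma sesq_form_scale_right: "sesq_form M u (c *s w) = c * sesq_form M u w"
  by (simp add: sesq_form_def sum_distrib_left mult.assoc mult.left_commute)

lemma sesq_form_axis: "sesq_form M (axis a 1) (axis b 1) = M$a$b"
proof -
  have "(\<Sum>j\<in>UNIV. cnj (axis a 1 $ i) * M$i$j * axis b 1 $ j) = (if i = a then M$i$b else 0)" for i
  proof -
    have "(\<Sum>j\<in>UNIV. cnj (axis a 1 $ i) * M$i$j * axis b 1 $ j)
        = (\<Sum>j\<in>UNIV. if j = b then cnj (axis a 1 $ i) * M$i$j else 0)"
      by (rule sum.cong) (auto simp: axis_def)
    then show ?thesis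
      by (simp add: axis_def)
  qed
  then show ?thesis
    by (simp add: sesq_form_def)
qed

lemma sesq_form_axis_add:
  "sesq_form M (axis a 1 + c *s axis b 1) (axis a 1 + c *s axis b 1)
     = M$a$a + c * M$a$b + cnj c * M$b$a + cnj c * c * M$b$b"
  by (simp add: sesq_form_add_left sesq_form_add_right sesq_form_scale_left
      sesq_form_scale_right sesq_form_axis algebra_simps)

lemma psd_add: "psd M \<Longrightarrow> psd N \<Longrightarrow> psd (M + N)"
  by (simp add: psd_iff_sesq_form sesq_form_add_matrix)

lemma psd_sum: "(\<And>g. g \<in> S \<Longrightarrow> psd (F g)) \<Longrightarrow> psd (\<Sum>g\<in>S. F g)"
  by (simp add: psd_iff_sesq_form sesq_form_sum_matrix sum_nonneg)

lemma psd_scaleR: "psd M \<Longrightarrow> 0 \<le> c \<Longrightarrow> psd (c *\<^sub>R M)"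
  by (simp add: psd_iff_sesq_form sesq_form_scaleR_matrix)

lemma psd_mat_1: "psd (mat 1 :: complex^'d^'d)"
  by (simp add: psd_iff_sesq_form sesq_form_mat_1 sum_nonneg)

lemma psd_zero: "psd (0 :: complex^'d^'d)"
  by (simp add: psd_iff_sesq_form sesq_form_def)

lemma psd_diagonal: assumes "psd M" shows "Im (M$a$a) = 0" "0 \<le> Re (M$a$a)"
  using assms unfolding psd_iff_sesq_form by (metis sesq_form_axis)+

lemma sesq_form_le_mat_1:
  assumes "psd (mat 1 - M)"
  shows "Re (sesq_form M v v) \<le> Re (sesq_form (mat 1) v v)"
proof -
  have "0 \<le> Re (sesq_form (mat 1 - M) v v)"
    using assms by (simp add: psd_iff_sesq_form)
  moreover have "sesq_form (mat 1) v v = sesq_form M v v + sesq_form (mat 1 - M) v v"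
    by (metis add.commute diff_add_cancel sesq_form_add_matrix)
  ultimately show ?thesis
    by simp
qed

lemma psd_diagonal_le_1:
  fixes M :: "complex^'d^'d"
  assumes "psd (mat 1 - M)"
  shows "Re (M$c$c) \<le> 1"
  using sesq_form_le_mat_1[OF assms, of "axis c 1"] unfolding sesq_form_axis by (simp add: mat_def)

section \<open>Hermitian matrices and traces\<close>

definition hermitian :: "complex^'d^'d \<Rightarrow> bool" where
  "hermitian M \<longleftrightarrow> (\<forall>a b. M$b$a = cnj (M$a$b))"

lemma psd_imp_hermitian: assumes "psd M" shows "hermitian M"
  unfolding hermitian_def
proof (intro allI)
  fix a b
  show "M$b$a = cnj (M$a$b)"
  proof (cases "a = b")
    case True
    then show ?thesis
      using psd_diagonal[OF assms, of a] by (simp add: complex_eq_iff)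
  next
    case False
    have "Im (sesq_form M (axis a 1 + c *s axis b 1) (axis a 1 + c *s axis b 1)) = 0" for c
      using assms by (simp add: psd_iff_sesq_form)
    from this[of 1] this[of \<i>] have "Im (M$a$b) + Im (M$b$a) = 0" "Re (M$a$b) - Re (M$b$a) = 0"
      using psd_diagonal(1)[OF assms, of a] psd_diagonal(1)[OF assms, of b]
      unfolding sesq_form_axis_add by simp_all
    then show ?thesis
      by (simp add: complex_eq_iff)
  qed
qed

lemma hermitian_diff: "hermitian X \<Longrightarrow> hermitian Y \<Longrightarrow> hermitian (X - Y)"
  unfolding hermitian_def by (metis complex_cnj_diff vector_minus_component)

lemma hermitian_trace_real: assumes "hermitian D" shows "trace D = of_real (Re (trace D))"
proof -
  have "Im (D$a$a) = 0" for a
  proof -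
    have "D$a$a = cnj (D$a$a)"
      using assms unfolding hermitian_def by blast
    from arg_cong[OF this, of Im] show ?thesis
      by simp
  qed
  then show ?thesis
    by (simp add: complex_eq_iff trace_def)
qed

lemma hermitian_sesq_form_real: assumes "hermitian D" shows "Im (sesq_form D v v) = 0"
proof -
  have "cnj (sesq_form D v v) = (\<Sum>a\<in>UNIV. \<Sum>b\<in>UNIV. v$a * cnj (D$a$b) * cnj (v$b))"
    by (simp add: sesq_form_def)
  also have "\<dots> = (\<Sum>a\<in>UNIV. \<Sum>b\<in>UNIV. v$a * D$b$a * cnj (v$b))"
  proof -
    have "cnj (D$a$b) = D$b$a" for a b
      using assms unfolding hermitian_def by (metis complex_cnj_cnj)
    then show ?thesis
      by simp
  qed
  also have "\<dots> = sesq_form D v v"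
    unfolding sesq_form_def by (subst sum.swap) (simp add: mult.commute mult.left_commute)
  finally have "Im (cnj (sesq_form D v v)) = Im (sesq_form D v v)"
    by simp
  then show ?thesis
    by simp
qed

lemma inner_eq_Re_trace_mult:
  assumes "hermitian X"
  shows "inner Y X = Re (trace (Y ** X))"
proof -
  have "Re (trace (Y ** X)) = (\<Sum>a\<in>UNIV. \<Sum>b\<in>UNIV. Re (Y$a$b * X$b$a))"
    by (simp add: trace_def matrix_matrix_mult_def)
  also have "\<dots> = (\<Sum>a\<in>UNIV. \<Sum>b\<in>UNIV. inner (Y$a$b) (X$a$b))"
  proof (intro sum.cong refl)
    fix a b
    have "X$b$a = cnj (X$a$b)"
      using assms unfolding hermitian_def by blast
    then show "Re (Y$a$b * X$b$a) = inner (Y$a$b) (X$a$b)"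
      by (simp add: inner_complex_def)
  qed
  also have "\<dots> = inner Y X"
    by (simp add: inner_vec_def)
  finally show ?thesis ..
qed

lemma trace_scaleR: "trace (c *\<^sub>R M) = of_real c * (trace M :: complex)"
  unfolding trace_def vector_scaleR_component unfolding scaleR_conv_of_real sum_distrib_left ..

lemma trace_mult_add_left:
  fixes A B X :: "complex^'d^'d"
  shows "trace ((A + B) ** X) = trace (A ** X) + trace (B ** X)"
  by (simp add: trace_def matrix_matrix_mult_def ring_distribs sum.distrib)

lemma trace_mult_diff_left:
  fixes A B X :: "complex^'d^'d"
  shows "trace ((A - B) ** X) = trace (A ** X) - trace (B ** X)"
proof -
  have "trace (A ** X) = trace (B ** X) + trace ((A - B) ** X)"
    using trace_mult_add_left[of B "A - B" X] by simp
  then show ?thesis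
    by simp
qed

lemma trace_mult_scaleR_left: "trace ((c *\<^sub>R A) ** X) = of_real c * (trace (A ** X) :: complex)"
  by (simp add: trace_scaleR flip: scalar_matrix_assoc)

lemma trace_mult_sum_right: "trace (K ** (\<Sum>x\<in>S. E x)) = (\<Sum>x\<in>S. trace (K ** E x))"
  by (induction S rule: infinite_finite_induct)
    (simp_all add: matrix_add_ldistrib trace_add trace_def sum.distrib)

section \<open>States detecting trace functionals\<close>

lemma psd_normalized_in_density_ops:
  assumes "psd M" "trace M = of_real c" "0 < c"
  shows "(1 / c) *\<^sub>R M \<in> density_ops"
proof -
  have "trace ((1 / c) *\<^sub>R M) = of_real (1 / c) * of_real c"
    unfolding trace_scaleR assms(2) ..
  also have "\<dots> = 1"
    using assms(3) by (simp flip: of_real_mult)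
  finally show ?thesis
    using assms(1,3) by (simp add: density_ops_def psd_scaleR)
qed

lemma abs_Re_trace_le: "\<bar>Re (trace D)\<bar> \<le> (\<Sum>a\<in>UNIV. \<Sum>b\<in>UNIV. cmod (D$a$b))"
proof -
  have "\<bar>Re (trace D)\<bar> \<le> (\<Sum>a\<in>UNIV. cmod (D$a$a))"
    unfolding trace_def by (rule order_trans[OF abs_Re_le_cmod norm_sum])
  also have "\<dots> \<le> (\<Sum>a\<in>UNIV. \<Sum>b\<in>UNIV. cmod (D$a$b))"
    by (intro sum_mono member_le_sum) auto
  finally show ?thesis .
qed

lemma sesq_form_norm_bound:
  "cmod (sesq_form D v v) \<le> (\<Sum>a\<in>UNIV. \<Sum>b\<in>UNIV. cmod (D$a$b)) * (\<Sum>i\<in>UNIV. (cmod (v$i))\<^sup>2)"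
proof -
  let ?S = "\<Sum>i\<in>UNIV. (cmod (v$i))\<^sup>2"
  have entry: "cmod (v$a) * cmod (v$b) \<le> ?S" for a b
  proof -
    have "(cmod (v$a))\<^sup>2 \<le> ?S" "(cmod (v$b))\<^sup>2 \<le> ?S"
      by (auto intro!: member_le_sum)
    moreover have "2 * (cmod (v$a) * cmod (v$b)) \<le> (cmod (v$a))\<^sup>2 + (cmod (v$b))\<^sup>2"
      using sum_squares_bound[of "cmod (v$a)" "cmod (v$b)"] by simp
    ultimately show ?thesis
      by linarith
  qed
  have "cmod (sesq_form D v v) \<le> (\<Sum>a\<in>UNIV. \<Sum>b\<in>UNIV. cmod (cnj (v$a) * D$a$b * v$b))"
    unfolding sesq_form_def by (rule order_trans[OF norm_sum sum_mono], rule norm_sum)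
  also have "\<dots> \<le> (\<Sum>a\<in>UNIV. \<Sum>b\<in>UNIV. cmod (D$a$b) * ?S)"
  proof (intro sum_mono)
    fix a b
    have "cmod (cnj (v$a) * D$a$b * v$b) = cmod (D$a$b) * (cmod (v$a) * cmod (v$b))"
      by (simp add: norm_mult)
    also have "\<dots> \<le> cmod (D$a$b) * ?S"
      by (simp add: entry mult_left_mono)
    finally show "cmod (cnj (v$a) * D$a$b * v$b) \<le> cmod (D$a$b) * ?S" .
  qed
  also have "\<dots> = (\<Sum>a\<in>UNIV. \<Sum>b\<in>UNIV. cmod (D$a$b)) * ?S"
    by (simp add: sum_distrib_right)
  finally show ?thesis .
qed

lemma psd_mat_1_add_scaleR:
  fixes D :: "complex^'d^'d"
  assumes "hermitian D" "0 \<le> t" "t * (\<Sum>a\<in>UNIV. \<Sum>b\<in>UNIV. cmod (D$a$b)) \<le> 1"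
  shows "psd (mat 1 + t *\<^sub>R D)"
  unfolding psd_iff_sesq_form
proof
  fix v :: "complex^'d"
  let ?C = "\<Sum>a\<in>UNIV. \<Sum>b\<in>UNIV. cmod (D$a$b)" and ?S = "\<Sum>i\<in>UNIV. (cmod (v$i))\<^sup>2"
  have form: "sesq_form (mat 1 + t *\<^sub>R D) v v = of_real ?S + of_real t * sesq_form D v v"
    by (simp add: sesq_form_add_matrix sesq_form_scaleR_matrix sesq_form_mat_1)
  have "- (?C * ?S) \<le> Re (sesq_form D v v)"
    using sesq_form_norm_bound[of D v] abs_Re_le_cmod[of "sesq_form D v v"] by linarith
  then have "t * - (?C * ?S) \<le> t * Re (sesq_form D v v)"
    using assms(2) by (rule mult_left_mono)
  moreover have "t * ?C * ?S \<le> ?S"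
    using mult_right_mono[OF assms(3), of ?S] by (simp add: sum_nonneg)
  ultimately have "0 \<le> ?S + t * Re (sesq_form D v v)"
    by (simp add: mult.assoc)
  then show "Im (sesq_form (mat 1 + t *\<^sub>R D) v v) = 0 \<and> 0 \<le> Re (sesq_form (mat 1 + t *\<^sub>R D) v v)"
    using hermitian_sesq_form_real[OF assms(1), of v] unfolding form by simp
qed

lemma exists_density_op_detecting:
  fixes D :: "complex^'d^'d"
  assumes "hermitian D"
  obtains \<rho> where "\<rho> \<in> density_ops"
    "\<And>X Y. trace X = trace Y \<Longrightarrow> trace (\<rho> ** X) = trace (\<rho> ** Y) \<Longrightarrow>
       trace (D ** X) = trace (D ** Y)"
proof -
  define C where "C = (\<Sum>a\<in>UNIV. \<Sum>b\<in>UNIV. cmod (D$a$b))"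
  define t where "t = 1 / (C + 1)"
  have "0 \<le> C"
    unfolding C_def by (simp add: sum_nonneg)
  then have t_pos: "0 < t" and tC: "t * C < 1"
    by (simp_all add: t_def)
  define r where "r = Re (trace D)"
  have "t * - C \<le> t * r"
    using t_pos abs_Re_trace_le[of D] unfolding C_def r_def by (intro mult_left_mono) auto
  moreover have "1 \<le> real CARD('d)"
    by simp
  ultimately have "0 < real CARD('d) + t * r"
    using tC by (simp only: mult_minus_right)
  define c where "c = real CARD('d) + t * r"
  have "0 < c"
    unfolding c_def by fact
  define M where "M = mat 1 + t *\<^sub>R D"
  have "psd M"
    unfolding M_def using assms t_pos tC by (intro psd_mat_1_add_scaleR) (auto simp: C_def)
  moreover have "trace M = of_real c"
    using hermitian_trace_real[OF assms]
    unfolding M_def c_def r_def trace_add trace_scaleR trace_I by simp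
  ultimately have "(1 / c) *\<^sub>R M \<in> density_ops"
    using \<open>0 < c\<close> by (rule psd_normalized_in_density_ops)
  moreover have "trace (D ** X) = trace (D ** Y)"
    if "trace X = trace Y" "trace (((1 / c) *\<^sub>R M) ** X) = trace (((1 / c) *\<^sub>R M) ** Y)" for X Y
  proof -
    have "of_real (1 / c) * of_real t * trace (D ** X) = of_real (1 / c) * of_real t * trace (D ** Y)"
      using that unfolding M_def trace_mult_scaleR_left trace_mult_add_left matrix_mul_lid
      by (simp add: ring_distribs mult.assoc)
    then show ?thesis
      using t_pos \<open>0 < c\<close> by simp
  qed
  ultimately show ?thesis
    by (rule that)
qed

lemma exists_density_ops_determining:
  fixes D :: "'i \<Rightarrow> complex^'d^'d"
  assumes "finite I" "\<And>i. i \<in> I \<Longrightarrow> hermitian (D i)"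
  obtains S0 where "S0 \<subseteq> density_ops" "finite S0" "card S0 \<le> card I + 1"
    "\<forall>X Y. (\<forall>\<rho>\<in>S0. trace (\<rho> ** X) = trace (\<rho> ** Y)) \<longrightarrow> (\<forall>i\<in>I. trace (D i ** X) = trace (D i ** Y))"
proof -
  have "\<exists>\<rho>. \<rho> \<in> density_ops \<and> (\<forall>X Y. trace X = trace Y \<longrightarrow>
      trace (\<rho> ** X) = trace (\<rho> ** Y) \<longrightarrow> trace (D i ** X) = trace (D i ** Y))" if "i \<in> I" for i
    using exists_density_op_detecting[OF assms(2)[OF that]] by blast
  then obtain R where R: "\<forall>i\<in>I. R i \<in> density_ops \<and> (\<forall>X Y. trace X = trace Y \<longrightarrow>
      trace (R i ** X) = trace (R i ** Y) \<longrightarrow> trace (D i ** X) = trace (D i ** Y))"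
    by metis
  define d where "d = real CARD('d)"
  have "0 < d"
    by (simp add: d_def)
  define \<rho>0 where "\<rho>0 = (1 / d) *\<^sub>R (mat 1 :: complex^'d^'d)"
  have "\<rho>0 \<in> density_ops"
    unfolding \<rho>0_def using psd_mat_1 _ \<open>0 < d\<close>
    by (rule psd_normalized_in_density_ops) (simp add: trace_I d_def)
  have trace_\<rho>0: "trace (\<rho>0 ** X) = of_real (1 / d) * trace X" for X
    unfolding \<rho>0_def trace_mult_scaleR_left by simp
  show ?thesis
  proof
    show "insert \<rho>0 (R ` I) \<subseteq> density_ops"
      using \<open>\<rho>0 \<in> density_ops\<close> R by auto
    show "finite (insert \<rho>0 (R ` I))"
      using assms(1) by simp
    show "card (insert \<rho>0 (R ` I)) \<le> card I + 1"
      using card_image_le[OF assms(1), of R] assms(1) by (simp add: card_insert_if)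
    show "\<forall>X Y. (\<forall>\<rho>\<in>insert \<rho>0 (R ` I). trace (\<rho> ** X) = trace (\<rho> ** Y)) \<longrightarrow>
       (\<forall>i\<in>I. trace (D i ** X) = trace (D i ** Y))"
    proof (intro allI impI ballI)
      fix X Y i
      assume same: "\<forall>\<rho>\<in>insert \<rho>0 (R ` I). trace (\<rho> ** X) = trace (\<rho> ** Y)" and "i \<in> I"
      then have "trace X = trace Y"
        using \<open>0 < d\<close> trace_\<rho>0[of X] trace_\<rho>0[of Y] by simp
      moreover have "trace (R i ** X) = trace (R i ** Y)"
        using same \<open>i \<in> I\<close> by blast
      ultimately show "trace (D i ** X) = trace (D i ** Y)"
        using R \<open>i \<in> I\<close> by blast
    qed
  qed
qed

section \<open>Compactness of the set of observables\<close>

lemma observable_outcomes_nonempty: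
  assumes "is_observable (E :: 'o \<Rightarrow> complex^'d^'d) Om"
  shows "Om \<noteq> {}"
proof
  assume "Om = {}"
  then have "(mat 1 :: complex^'d^'d) = 0"
    using assms by (simp add: is_observable_def)
  then have "(mat 1 :: complex^'d^'d) $ a $ a = 0" for a
    by simp
  then show False
    by (simp add: mat_def)
qed

lemma observable_point_mass:
  assumes "finite Om" "x \<in> Om"
  shows "is_observable (\<lambda>y. if y = x then mat 1 else 0 :: complex^'d^'d) Om"
  using assms by (simp add: is_observable_def psd_mat_1 psd_zero)

lemma observable_convex_combination:
  assumes "is_observable G P" "is_observable G' P" "0 \<le> t" "t \<le> 1"
  shows "is_observable (\<lambda>g. (1 - t) *\<^sub>R G g + t *\<^sub>R G' g) P"
proof -
  have "(\<Sum>g\<in>P. (1 - t) *\<^sub>R G g + t *\<^sub>R G' g) = (1 - t) *\<^sub>R mat 1 + t *\<^sub>R mat 1"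
    using assms(1,2) by (simp add: is_observable_def sum.distrib flip: scaleR_sum_right)
  also have "\<dots> = mat 1"
    by (simp flip: scaleR_add_left)
  finally show ?thesis
    using assms by (simp add: is_observable_def psd_add psd_scaleR)
qed

lemma psd_entry_bound:
  fixes M :: "complex^'d^'d"
  assumes "psd M" "psd (mat 1 - M)"
  shows "cmod (M$a$b) \<le> 2"
proof -
  note form_le = sesq_form_le_mat_1[OF assms(2)]
  have form_nonneg: "0 \<le> Re (sesq_form M v v)" for v
    using assms(1) by (simp add: psd_iff_sesq_form)
  have diag: "0 \<le> Re (M$c$c)" "Re (M$c$c) \<le> 1" for c
    using psd_diagonal(2)[OF assms(1)] psd_diagonal_le_1[OF assms(2)] by blast+
  show ?thesis
  proof (cases "a = b")
    case True
    have "cmod (M$a$a) = \<bar>Re (M$a$a)\<bar>"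
      using psd_diagonal(1)[OF assms(1)] by (rule cmod_eq_Re)
    then show ?thesis
      using True diag[of a] by simp
  next
    case False
    let ?u = "axis a 1 + 1 *s axis b 1" and ?w = "axis a 1 + \<i> *s axis b 1"
    have "Re (sesq_form M ?u ?u) \<le> Re (sesq_form (mat 1) ?u ?u)" "0 \<le> Re (sesq_form M ?u ?u)"
      "Re (sesq_form M ?w ?w) \<le> Re (sesq_form (mat 1) ?w ?w)" "0 \<le> Re (sesq_form M ?w ?w)"
      by (rule form_le form_nonneg)+
    then have "Re (M$a$a) + Re (M$a$b) + Re (M$b$a) + Re (M$b$b) \<le> 2"
      "0 \<le> Re (M$a$a) + Re (M$a$b) + Re (M$b$a) + Re (M$b$b)"
      "Re (M$a$a) - Im (M$a$b) + Im (M$b$a) + Re (M$b$b) \<le> 2"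
      "0 \<le> Re (M$a$a) - Im (M$a$b) + Im (M$b$a) + Re (M$b$b)"
      unfolding sesq_form_axis_add using False by (simp_all add: mat_def)
    moreover have "M$b$a = cnj (M$a$b)"
      using psd_imp_hermitian[OF assms(1)] unfolding hermitian_def by blast
    then have "Re (M$b$a) = Re (M$a$b)" "Im (M$b$a) = - Im (M$a$b)"
      by simp_all
    ultimately have "\<bar>Re (M$a$b)\<bar> \<le> 1" "\<bar>Im (M$a$b)\<bar> \<le> 1"
      using diag[of a] diag[of b] by linarith+
    then show ?thesis
      using cmod_le[of "M$a$b"] by simp
  qed
qed

lemma norm_vec_le_sum: "norm (x :: 'a::real_normed_vector^'n) \<le> (\<Sum>i\<in>UNIV. norm (x$i))"
  unfolding norm_vec_def by (rule L2_set_le_sum) simp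

lemma observable_effect_norm_le:
  fixes G :: "'p \<Rightarrow> complex^'d^'d"
  assumes "is_observable G P" "g \<in> P"
  shows "norm (G g) \<le> 2 * real (CARD('d) * CARD('d))"
proof -
  have "psd (G g)"
    using assms by (simp add: is_observable_def)
  moreover have "psd (mat 1 - G g)"
  proof -
    have "psd (\<Sum>g'\<in>P - {g}. G g')"
      using assms(1) by (intro psd_sum) (simp add: is_observable_def)
    moreover have "mat 1 - G g = (\<Sum>g'\<in>P - {g}. G g')"
      using assms sum.remove[of P g G] by (simp add: is_observable_def)
    ultimately show ?thesis
      by simp
  qed
  ultimately have entry: "norm (G g $ a $ b) \<le> 2" for a b
    by (rule psd_entry_bound)
  have "norm (G g) \<le> (\<Sum>a\<in>UNIV. \<Sum>b\<in>UNIV. norm (G g $ a $ b))"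
    by (rule order_trans[OF norm_vec_le_sum sum_mono[OF norm_vec_le_sum]])
  also have "\<dots> \<le> (\<Sum>a\<in>(UNIV :: 'd set). \<Sum>b\<in>(UNIV :: 'd set). 2)"
    by (intro sum_mono entry)
  finally show ?thesis
    by simp
qed

lemma psd_limit:
  assumes "\<And>k. psd (M k)" "M \<longlonglongrightarrow> L"
  shows "psd L"
  unfolding psd_iff_sesq_form
proof
  fix v
  have "(\<lambda>k. sesq_form (M k) v v) \<longlonglongrightarrow> sesq_form L v v"
    unfolding sesq_form_def by (intro tendsto_intros assms(2))
  then have Im: "(\<lambda>k. Im (sesq_form (M k) v v)) \<longlonglongrightarrow> Im (sesq_form L v v)"
    and Re: "(\<lambda>k. Re (sesq_form (M k) v v)) \<longlonglongrightarrow> Re (sesq_form L v v)"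
    by (rule tendsto_Im, rule tendsto_Re)
  have "Im (sesq_form L v v) = 0"
    using Im assms(1) by (simp add: psd_iff_sesq_form LIMSEQ_const_iff)
  moreover have "0 \<le> Re (sesq_form L v v)"
    using Re by (rule LIMSEQ_le_const) (use assms(1) in \<open>simp add: psd_iff_sesq_form\<close>)
  ultimately show "Im (sesq_form L v v) = 0 \<and> 0 \<le> Re (sesq_form L v v)"
    by simp
qed

lemma observable_limit:
  fixes Gs :: "nat \<Rightarrow> 'p \<Rightarrow> complex^'d^'d"
  assumes "finite P" "\<And>k. is_observable (Gs k) P" "\<And>g. g \<in> P \<Longrightarrow> (\<lambda>k. Gs k g) \<longlonglongrightarrow> L g"
  shows "is_observable L P"
  unfolding is_observable_def
proof (intro conjI ballI)
  show "finite P"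
    by fact
  show "psd (L g)" if "g \<in> P" for g
  proof (rule psd_limit[OF _ assms(3)[OF that]])
    show "psd (Gs k g)" for k
      using assms(2)[of k] that by (simp add: is_observable_def)
  qed
  have "(\<lambda>k. \<Sum>g\<in>P. Gs k g) \<longlonglongrightarrow> (\<Sum>g\<in>P. L g)"
    by (intro tendsto_sum assms(3))
  moreover have "(\<lambda>k. \<Sum>g\<in>P. Gs k g) = (\<lambda>k. mat 1)"
    using assms(2) by (simp add: is_observable_def)
  ultimately show "(\<Sum>g\<in>P. L g) = mat 1"
    by (simp add: LIMSEQ_const_iff)
qed

lemma observables_convergent_subseq:
  fixes Gs :: "nat \<Rightarrow> 'p \<Rightarrow> complex^'d^'d"
  assumes "finite P" "\<And>k. is_observable (Gs k) P"
  obtains r L where "strict_mono r" "is_observable L P"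
    "\<And>g. g \<in> P \<Longrightarrow> (\<lambda>k. Gs (r k) g) \<longlonglongrightarrow> L g"
proof -
  have "bounded ((\<lambda>G. G g) ` range Gs)" if "g \<in> P" for g
    unfolding bounded_iff using observable_effect_norm_le[OF assms(2) that] by blast
  then have "\<forall>\<delta>\<subseteq>P. \<exists>L r. strict_mono r \<and>
      (\<forall>e>0. eventually (\<lambda>k. \<forall>g\<in>\<delta>. dist (Gs (r k) g) (L g) < e) sequentially)"
    by (intro compact_lemma_general[where proj = "\<lambda>G g. G g" and unproj = "\<lambda>G. G"] assms(1)) auto
  from this[rule_format, OF order_refl] obtain L r where "strict_mono r"
    and unif: "\<forall>e>0. eventually (\<lambda>k. \<forall>g\<in>P. dist (Gs (r k) g) (L g) < e) sequentially"
    by auto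
  have lim: "(\<lambda>k. Gs (r k) g) \<longlonglongrightarrow> L g" if "g \<in> P" for g
    unfolding tendsto_iff
  proof (intro allI impI)
    fix e :: real
    assume "0 < e"
    with unif have "eventually (\<lambda>k. \<forall>g\<in>P. dist (Gs (r k) g) (L g) < e) sequentially"
      by blast
    then show "eventually (\<lambda>k. dist (Gs (r k) g) (L g) < e) sequentially"
      by eventually_elim (use that in blast)
  qed
  have "is_observable L P"
    using assms(1) assms(2) lim by (rule observable_limit)
  from \<open>strict_mono r\<close> this lim show ?thesis
    by (rule that)
qed

lemma observable_attains_min:
  fixes F :: "('p \<Rightarrow> complex^'d^'d) \<Rightarrow> real" and G0 :: "'p \<Rightarrow> complex^'d^'d"
  assumes "finite P" "is_observable G0 P" "\<And>G. 0 \<le> F G"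
    and cont: "\<And>Gs L. (\<And>g. g \<in> P \<Longrightarrow> (\<lambda>k. Gs k g) \<longlonglongrightarrow> L g) \<Longrightarrow> (\<lambda>k. F (Gs k)) \<longlonglongrightarrow> F L"
  obtains L where "is_observable L P" "\<And>G. is_observable G P \<Longrightarrow> F L \<le> F G"
proof -
  define J where "J = {G :: 'p \<Rightarrow> complex^'d^'d. is_observable G P}"
  have "F ` J \<noteq> {}"
    using assms(2) unfolding J_def by blast
  moreover have "bdd_below (F ` J)"
    using assms(3) by (intro bdd_belowI[of _ 0]) blast
  ultimately have "Inf (F ` J) \<in> closure (F ` J)"
    by (rule closure_contains_Inf)
  then obtain y where y: "\<And>k. y k \<in> F ` J" and "y \<longlonglongrightarrow> Inf (F ` J)"
    unfolding closure_sequential by blast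
  have "\<forall>k. \<exists>G. G \<in> J \<and> y k = F G"
    using y by blast
  then obtain Gs where Gs: "\<And>k. Gs k \<in> J" and y_eq: "\<And>k. y k = F (Gs k)"
    by (metis choice)
  have "y = (\<lambda>k. F (Gs k))"
    by (simp add: fun_eq_iff y_eq)
  with \<open>y \<longlonglongrightarrow> Inf (F ` J)\<close> have "(\<lambda>k. F (Gs k)) \<longlonglongrightarrow> Inf (F ` J)"
    by simp
  have "\<And>k. is_observable (Gs k) P"
    using Gs by (simp add: J_def)
  then obtain r L where "strict_mono r" "is_observable L P"
    and lim: "\<And>g. g \<in> P \<Longrightarrow> (\<lambda>k. Gs (r k) g) \<longlonglongrightarrow> L g"
    by (rule observables_convergent_subseq[where Gs = Gs, OF assms(1)]) blast
  have "(\<lambda>k. F (Gs (r k))) \<longlonglongrightarrow> Inf (F ` J)"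
    using LIMSEQ_subseq_LIMSEQ[OF \<open>(\<lambda>k. F (Gs k)) \<longlonglongrightarrow> Inf (F ` J)\<close> \<open>strict_mono r\<close>]
    by (simp add: comp_def)
  moreover have "(\<lambda>k. F (Gs (r k))) \<longlonglongrightarrow> F L"
    by (rule cont[OF lim])
  ultimately have "F L = Inf (F ` J)"
    by (rule LIMSEQ_unique[rotated])
  then have "F L \<le> F G" if "is_observable G P" for G
    using cInf_lower[OF _ \<open>bdd_below (F ` J)\<close>, of "F G"] that by (simp add: J_def)
  with \<open>is_observable L P\<close> show ?thesis
    by (rule that)
qed

section \<open>Separating an incompatible family from the compatible ones\<close>

definition tuple_inner :: "nat \<Rightarrow> (nat \<Rightarrow> 'o set) \<Rightarrow> (nat \<Rightarrow> 'o \<Rightarrow> 'a::real_inner) \<Rightarrow> (nat \<Rightarrow> 'o \<Rightarrow> 'a) \<Rightarrow> real"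
  where "tuple_inner n Om u w = (\<Sum>j<n. \<Sum>x\<in>Om j. inner (u j x) (w j x))"

lemma tuple_inner_cong:
  "(\<And>j x. j < n \<Longrightarrow> x \<in> Om j \<Longrightarrow> w j x = w' j x) \<Longrightarrow> tuple_inner n Om u w = tuple_inner n Om u w'"
  unfolding tuple_inner_def by (intro sum.cong refl) auto

lemma tuple_inner_diff_right:
  "tuple_inner n Om u (\<lambda>j x. v j x - w j x) = tuple_inner n Om u v - tuple_inner n Om u w"
  by (simp add: tuple_inner_def inner_diff_right sum_subtractf)

lemma tuple_inner_self_nonneg: "0 \<le> tuple_inner n Om u u"
  by (simp add: tuple_inner_def sum_nonneg)

lemma tuple_inner_self_pos:
  assumes "\<And>j. j < n \<Longrightarrow> finite (Om j)" "j < n" "x \<in> Om j" "u j x \<noteq> 0"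
  shows "0 < tuple_inner n Om u u"
proof -
  have "0 < inner (u j x) (u j x)"
    using assms(4) by simp
  also have "\<dots> \<le> (\<Sum>x'\<in>Om j. inner (u j x') (u j x'))"
    using assms(1-3) by (intro member_le_sum) auto
  also have "\<dots> \<le> tuple_inner n Om u u"
    unfolding tuple_inner_def using assms(2)
    by (intro member_le_sum) (auto intro: sum_nonneg)
  finally show ?thesis .
qed

lemma tuple_inner_diff_scaleR_self:
  "tuple_inner n Om (\<lambda>j x. u j x - t *\<^sub>R w j x) (\<lambda>j x. u j x - t *\<^sub>R w j x)
     = tuple_inner n Om u u - 2 * t * tuple_inner n Om u w + t\<^sup>2 * tuple_inner n Om w w"
  by (simp add: tuple_inner_def inner_diff inner_commute power2_eq_square algebra_simps
      sum.distrib sum_subtractf sum_distrib_left)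

lemma tuple_inner_nonpos_if_min:
  assumes "\<And>t. 0 < t \<Longrightarrow> t \<le> 1 \<Longrightarrow>
    tuple_inner n Om u u \<le> tuple_inner n Om (\<lambda>j x. u j x - t *\<^sub>R w j x) (\<lambda>j x. u j x - t *\<^sub>R w j x)"
  shows "tuple_inner n Om u w \<le> 0"
proof (rule ccontr)
  define s where "s = tuple_inner n Om u w"
  define N where "N = tuple_inner n Om w w"
  assume "\<not> tuple_inner n Om u w \<le> 0"
  then have "0 < s"
    by (simp add: s_def)
  have "0 \<le> N"
    unfolding N_def by (rule tuple_inner_self_nonneg)
  define t where "t = min 1 (s / (N + 1))"
  have "0 < t" "t \<le> 1"
    using \<open>0 < s\<close> \<open>0 \<le> N\<close> by (auto simp: t_def)
  from assms[OF this] have "2 * t * s \<le> t\<^sup>2 * N"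
    unfolding tuple_inner_diff_scaleR_self s_def N_def by simp
  then have "2 * s \<le> t * N"
    using \<open>0 < t\<close> by (simp add: power2_eq_square mult.assoc)
  moreover have "t * N \<le> s / (N + 1) * N"
    using \<open>0 \<le> N\<close> by (intro mult_right_mono) (auto simp: t_def)
  moreover have "s / (N + 1) * N < s"
    using \<open>0 < s\<close> \<open>0 \<le> N\<close> by (simp add: field_simps)
  ultimately show False
    using \<open>0 < s\<close> by linarith
qed

definition marginal :: "(nat \<Rightarrow> 'o) set \<Rightarrow> ((nat \<Rightarrow> 'o) \<Rightarrow> 'm::comm_monoid_add) \<Rightarrow> nat \<Rightarrow> 'o \<Rightarrow> 'm"
  where "marginal P G j x = (\<Sum>g\<in>{g\<in>P. g j = x}. G g)"

lemma compatible_iff_marginal: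
  "compatible n Om A \<longleftrightarrow> (\<exists>G. is_observable G (PiE {..<n} Om) \<and>
     (\<forall>j<n. \<forall>x\<in>Om j. marginal (PiE {..<n} Om) G j x = A j x))"
  by (simp add: compatible_def marginal_def)

lemma psd_marginal: "is_observable G P \<Longrightarrow> psd (marginal P G j x)"
  unfolding marginal_def by (intro psd_sum) (simp add: is_observable_def)

lemma marginal_linear_combination:
  fixes L G :: "(nat \<Rightarrow> 'o) \<Rightarrow> 'm::real_vector"
  shows "marginal P (\<lambda>g. a *\<^sub>R L g + b *\<^sub>R G g) j x = a *\<^sub>R marginal P L j x + b *\<^sub>R marginal P G j x"
  by (simp add: marginal_def sum.distrib scaleR_sum_right)

lemma exists_closest_marginal:
  fixes A :: "nat \<Rightarrow> 'o \<Rightarrow> complex^'d^'d"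
  assumes "finite P" "P \<noteq> {}"
  obtains L where "is_observable L P"
    "\<And>G. is_observable G P \<Longrightarrow>
      tuple_inner n Om (\<lambda>j x. A j x - marginal P L j x) (\<lambda>j x. A j x - marginal P L j x)
        \<le> tuple_inner n Om (\<lambda>j x. A j x - marginal P G j x) (\<lambda>j x. A j x - marginal P G j x)"
proof -
  obtain g0 where "g0 \<in> P"
    using assms(2) by blast
  define F where "F G = tuple_inner n Om (\<lambda>j x. A j x - marginal P G j x) (\<lambda>j x. A j x - marginal P G j x)"
    for G :: "(nat \<Rightarrow> 'o) \<Rightarrow> complex^'d^'d"
  have cont: "(\<lambda>k. F (Gs k)) \<longlonglongrightarrow> F L" if "\<And>g. g \<in> P \<Longrightarrow> (\<lambda>k. Gs k g) \<longlonglongrightarrow> L g" for Gs L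
    unfolding F_def tuple_inner_def marginal_def by (intro tendsto_intros) (use that in auto)
  have F_nonneg: "0 \<le> F G" for G
    unfolding F_def by (rule tuple_inner_self_nonneg)
  show ?thesis
    using observable_attains_min[where F = F, OF assms(1)
        observable_point_mass[OF assms(1) \<open>g0 \<in> P\<close>] F_nonneg cont] that
    unfolding F_def by blast
qed

lemma closest_marginal_le:
  fixes A :: "nat \<Rightarrow> 'o \<Rightarrow> complex^'d^'d"
  assumes "is_observable L P" "is_observable G P"
    and min: "\<And>G. is_observable G P \<Longrightarrow>
      tuple_inner n Om (\<lambda>j x. A j x - marginal P L j x) (\<lambda>j x. A j x - marginal P L j x)
        \<le> tuple_inner n Om (\<lambda>j x. A j x - marginal P G j x) (\<lambda>j x. A j x - marginal P G j x)"
  shows "tuple_inner n Om (\<lambda>j x. A j x - marginal P L j x) (marginal P G)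
    \<le> tuple_inner n Om (\<lambda>j x. A j x - marginal P L j x) (marginal P L)"
proof -
  define h where "h j x = A j x - marginal P L j x" for j x
  define w where "w j x = marginal P G j x - marginal P L j x" for j x
  have "tuple_inner n Om h h \<le> tuple_inner n Om (\<lambda>j x. h j x - t *\<^sub>R w j x) (\<lambda>j x. h j x - t *\<^sub>R w j x)"
    if "0 < t" "t \<le> 1" for t
  proof -
    have "is_observable (\<lambda>g. (1 - t) *\<^sub>R L g + t *\<^sub>R G g) P"
      using assms(1,2) that by (intro observable_convex_combination) auto
    note min[OF this]
    moreover have eq: "A j x - marginal P (\<lambda>g. (1 - t) *\<^sub>R L g + t *\<^sub>R G g) j x = h j x - t *\<^sub>R w j x"
      for j x
      unfolding marginal_linear_combination by (simp add: h_def w_def algebra_simps)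
    ultimately show ?thesis
      unfolding h_def[symmetric] eq by simp
  qed
  then have "tuple_inner n Om h w \<le> 0"
    by (rule tuple_inner_nonpos_if_min)
  then show ?thesis
    unfolding h_def[symmetric] w_def[abs_def] tuple_inner_diff_right by simp
qed

lemma incompatible_separation:
  fixes A :: "nat \<Rightarrow> 'o \<Rightarrow> complex^'d^'d"
  assumes obs: "\<forall>j<n. is_observable (A j) (Om j)" and incomp: "\<not> compatible n Om A"
  obtains h where "\<And>j x. j < n \<Longrightarrow> x \<in> Om j \<Longrightarrow> hermitian (h j x)"
    "\<And>B. compatible n Om B \<Longrightarrow> tuple_inner n Om h B < tuple_inner n Om h A"
proof -
  define P where "P = PiE {..<n} Om"
  have fin: "finite (Om j)" if "j < n" for j
    using obs that by (simp add: is_observable_def)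
  have "finite P"
    unfolding P_def by (intro finite_PiE) (auto intro: fin)
  moreover have "P \<noteq> {}"
    unfolding P_def PiE_eq_empty_iff using obs observable_outcomes_nonempty by blast
  ultimately obtain L where L: "is_observable L P"
    and min: "\<And>G. is_observable G P \<Longrightarrow>
      tuple_inner n Om (\<lambda>j x. A j x - marginal P L j x) (\<lambda>j x. A j x - marginal P L j x)
        \<le> tuple_inner n Om (\<lambda>j x. A j x - marginal P G j x) (\<lambda>j x. A j x - marginal P G j x)"
    by (rule exists_closest_marginal[where A = A and n = n and Om = Om]) blast
  define h where "h j x = A j x - marginal P L j x" for j x
  have "hermitian (h j x)" if "j < n" "x \<in> Om j" for j x
    using obs that psd_marginal[OF L] unfolding h_def
    by (intro hermitian_diff psd_imp_hermitian) (auto simp: is_observable_def)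
  moreover have "tuple_inner n Om h B < tuple_inner n Om h A" if B: "compatible n Om B" for B
  proof -
    obtain G where G: "is_observable G P"
      and G_B: "\<And>j x. j < n \<Longrightarrow> x \<in> Om j \<Longrightarrow> marginal P G j x = B j x"
      using B unfolding compatible_iff_marginal P_def by blast
    have "tuple_inner n Om h B = tuple_inner n Om h (marginal P G)"
      using G_B by (intro tuple_inner_cong) simp
    also have "\<dots> \<le> tuple_inner n Om h (marginal P L)"
      using closest_marginal_le[OF L G min] unfolding h_def[symmetric] .
    also have "\<dots> < tuple_inner n Om h A"
    proof -
      have "\<exists>j<n. \<exists>x\<in>Om j. h j x \<noteq> 0"
        using incomp L unfolding compatible_iff_marginal P_def h_def by (metis eq_iff_diff_eq_0)
      then have "0 < tuple_inner n Om h h"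
        using tuple_inner_self_pos[of n Om, OF fin] by blast
      moreover have "tuple_inner n Om h h = tuple_inner n Om h A - tuple_inner n Om h (marginal P L)"
        using tuple_inner_diff_right[of n Om h A "marginal P L"] unfolding h_def[symmetric] .
      ultimately show ?thesis
        by linarith
    qed
    finally show ?thesis .
  qed
  ultimately show ?thesis
    using that by blast
qed

section \<open>Few states witness incompatibility\<close>

lemma sum_trace_mult_observable_shift:
  assumes "is_observable E Om"
  shows "(\<Sum>x\<in>Om. trace ((K x - C) ** E x)) = (\<Sum>x\<in>Om. trace (K x ** E x)) - trace C"
proof -
  have "(\<Sum>x\<in>Om. trace (C ** E x)) = trace C"
    using assms by (simp add: is_observable_def flip: trace_mult_sum_right)
  then show ?thesis
    by (simp add: trace_mult_diff_left sum_subtractf)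
qed

lemma tuple_inner_observables_shift:
  fixes h B :: "nat \<Rightarrow> 'o \<Rightarrow> complex^'d^'d"
  assumes "\<forall>j<n. is_observable (B j) (Om j)"
  shows "tuple_inner n Om h B
    = (\<Sum>j<n. \<Sum>x\<in>Om j. Re (trace ((h j x - C j) ** B j x))) + (\<Sum>j<n. Re (trace (C j)))"
proof -
  have "(\<Sum>x\<in>Om j. inner (h j x) (B j x))
      = (\<Sum>x\<in>Om j. Re (trace ((h j x - C j) ** B j x))) + Re (trace (C j))" if "j < n" for j
  proof -
    have "(\<Sum>x\<in>Om j. inner (h j x) (B j x)) = Re (\<Sum>x\<in>Om j. trace (h j x ** B j x))"
      using assms that by (auto simp: Re_sum is_observable_def psd_imp_hermitian inner_eq_Re_trace_mult
          intro!: sum.cong)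
    also have "\<dots> = Re (\<Sum>x\<in>Om j. trace ((h j x - C j) ** B j x)) + Re (trace (C j))"
      using sum_trace_mult_observable_shift[of "B j" "Om j" "h j" "C j"] assms that by simp
    finally show ?thesis
      by (simp add: Re_sum)
  qed
  then show ?thesis
    unfolding tuple_inner_def by (simp add: sum.distrib)
qed

lemma card_Sigma_remove_one:
  assumes "\<And>j. j < n \<Longrightarrow> finite (Om j)" "\<And>j. j < n \<Longrightarrow> x0 j \<in> Om j"
  shows "int (card (Sigma {..<n} (\<lambda>j. Om j - {x0 j}))) = (\<Sum>j<n. int (card (Om j))) - int n"
proof -
  have "card (Sigma {..<n} (\<lambda>j. Om j - {x0 j})) = (\<Sum>j<n. card (Om j - {x0 j}))"
    using assms(1) by (intro card_SigmaI) auto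
  also have "int \<dots> = (\<Sum>j<n. int (card (Om j)) - 1)"
    unfolding of_nat_sum
  proof (rule sum.cong[OF refl])
    fix j
    assume "j \<in> {..<n}"
    then have "finite (Om j)" "x0 j \<in> Om j"
      using assms by auto
    moreover from this have "0 < card (Om j)"
      by (auto simp: card_gt_0_iff)
    ultimately show "int (card (Om j - {x0 j})) = int (card (Om j)) - 1"
      by (simp add: card_Diff_singleton of_nat_diff)
  qed
  finally show ?thesis
    by (simp add: sum_subtractf)
qed

lemma not_S0_compatible_if_separated:
  fixes A h :: "nat \<Rightarrow> 'o \<Rightarrow> complex^'d^'d" and C :: "nat \<Rightarrow> complex^'d^'d"
  assumes obs: "\<forall>j<n. is_observable (A j) (Om j)"
    and sep: "\<And>B. compatible n Om B \<Longrightarrow> tuple_inner n Om h B < tuple_inner n Om h A"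
    and determined: "\<And>j x X Y. j < n \<Longrightarrow> x \<in> Om j \<Longrightarrow>
      \<forall>\<rho>\<in>S0. trace (\<rho> ** X) = trace (\<rho> ** Y) \<Longrightarrow>
      trace ((h j x - C j) ** X) = trace ((h j x - C j) ** Y)"
  shows "\<not> S0_compatible S0 n Om A"
proof
  assume "S0_compatible S0 n Om A"
  then obtain A' where obs': "\<forall>j<n. is_observable (A' j) (Om j)" and "compatible n Om A'"
    and agree: "\<forall>j<n. \<forall>x\<in>Om j. \<forall>\<rho>\<in>S0. trace (\<rho> ** A' j x) = trace (\<rho> ** A j x)"
    unfolding S0_compatible_def by blast
  have "(\<Sum>j<n. \<Sum>x\<in>Om j. Re (trace ((h j x - C j) ** A' j x)))
      = (\<Sum>j<n. \<Sum>x\<in>Om j. Re (trace ((h j x - C j) ** A j x)))"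
  proof (intro sum.cong refl)
    fix j x
    assume "j \<in> {..<n}" "x \<in> Om j"
    then show "Re (trace ((h j x - C j) ** A' j x)) = Re (trace ((h j x - C j) ** A j x))"
      using determined[of j x "A' j x" "A j x"] agree by simp
  qed
  then have "tuple_inner n Om h A' = tuple_inner n Om h A"
    unfolding tuple_inner_observables_shift[OF obs', of h C] tuple_inner_observables_shift[OF obs, of h C]
    by simp
  with sep[OF \<open>compatible n Om A'\<close>] show False
    by simp
qed

lemma incompatibility_witness_states:
  fixes A :: "nat \<Rightarrow> 'o \<Rightarrow> complex^'d^'d"
  assumes obs: "\<forall>j<n. is_observable (A j) (Om j)" and incomp: "\<not> compatible n Om A"
  obtains S0 where "S0 \<subseteq> density_ops" "finite S0" "\<not> S0_compatible S0 n Om A"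
    "int (card S0) \<le> (\<Sum>j<n. int (card (Om j))) - int n + 1"
proof -
  obtain h where herm: "\<And>j x. j < n \<Longrightarrow> x \<in> Om j \<Longrightarrow> hermitian (h j x)"
    and sep: "\<And>B. compatible n Om B \<Longrightarrow> tuple_inner n Om h B < tuple_inner n Om h A"
    using incompatible_separation[OF obs incomp] by blast
  have fin: "finite (Om j)" if "j < n" for j
    using obs that by (simp add: is_observable_def)
  define x0 where "x0 j = (SOME x. x \<in> Om j)" for j
  have x0: "x0 j \<in> Om j" if "j < n" for j
    using obs that observable_outcomes_nonempty[of "A j" "Om j"] unfolding x0_def
    by (simp add: some_in_eq)
  define C where "C j = h j (x0 j)" for j
  define D where "D = (\<lambda>(j, x). h j x - C j)"
  define I where "I = Sigma {..<n} (\<lambda>j. Om j - {x0 j})"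
  have "finite I"
    unfolding I_def using fin by (intro finite_SigmaI) auto
  moreover have "hermitian (D i)" if "i \<in> I" for i
    using that x0 herm unfolding I_def D_def C_def by (auto intro: hermitian_diff)
  ultimately obtain S0 where S0: "S0 \<subseteq> density_ops" "finite S0" "card S0 \<le> card I + 1"
    and determining: "\<forall>X Y. (\<forall>\<rho>\<in>S0. trace (\<rho> ** X) = trace (\<rho> ** Y)) \<longrightarrow>
       (\<forall>i\<in>I. trace (D i ** X) = trace (D i ** Y))"
    by (rule exists_density_ops_determining) blast
  have determined: "trace ((h j x - C j) ** X) = trace ((h j x - C j) ** Y)"
    if "j < n" "x \<in> Om j" "\<forall>\<rho>\<in>S0. trace (\<rho> ** X) = trace (\<rho> ** Y)" for j x X Y
  proof (cases "x = x0 j")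
    case True
    then show ?thesis
      by (simp add: C_def)
  next
    case False
    then have "(j, x) \<in> I"
      using that unfolding I_def by simp
    then have "trace (D (j, x) ** X) = trace (D (j, x) ** Y)"
      using determining that(3) by blast
    then show ?thesis
      by (simp add: D_def)
  qed
  have "\<not> S0_compatible S0 n Om A"
    by (rule not_S0_compatible_if_separated[OF obs sep determined])
  moreover have "int (card S0) \<le> (\<Sum>j<n. int (card (Om j))) - int n + 1"
    using S0(3) card_Sigma_remove_one[of n Om x0, OF fin x0] unfolding I_def by linarith
  ultimately show ?thesis
    using S0 that by blast
qed

lemma chi_incomp_le:
  fixes S0 :: "(complex^'d^'d) set"
  assumes "S0 \<subseteq> density_ops" "\<not> S0_compatible S0 n Om A"
  shows "chi_incomp n Om A \<le> aff_dim S0 + 1"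
  unfolding chi_incomp_def
proof (rule cInf_lower)
  show "aff_dim S0 + 1 \<in> {aff_dim S0 + 1 | S0. S0 \<subseteq> density_ops \<and> \<not> S0_compatible S0 n Om A}"
    using assms by blast
  show "bdd_below {aff_dim S0 + 1 | S0 :: (complex^'d^'d) set. S0 \<subseteq> density_ops \<and> \<not> S0_compatible S0 n Om A}"
  proof (rule bdd_belowI[of _ 0])
    fix k
    assume "k \<in> {aff_dim S0 + 1 | S0 :: (complex^'d^'d) set. S0 \<subseteq> density_ops \<and> \<not> S0_compatible S0 n Om A}"
    then obtain T :: "(complex^'d^'d) set" where "k = aff_dim T + 1"
      by blast
    then show "0 \<le> k"
      using aff_dim_geq[of T] by linarith
  qed
qed

theorem proposition4p5:
  fixes n :: nat and Om :: "nat \<Rightarrow> 'o set" and A :: "nat \<Rightarrow> 'o \<Rightarrow> complex^'d^'d"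
  assumes "\<forall>j<n. is_observable (A j) (Om j)"
    and "\<not> compatible n Om A"
  shows "chi_incomp n Om A \<le> (\<Sum>j<n. int (card (Om j))) - int n + 1"
proof -
  obtain S0 where "S0 \<subseteq> density_ops" "finite S0" "\<not> S0_compatible S0 n Om A"
    and card_S0: "int (card S0) \<le> (\<Sum>j<n. int (card (Om j))) - int n + 1"
    using incompatibility_witness_states[OF assms] by blast
  then have "chi_incomp n Om A \<le> aff_dim S0 + 1"
    by (intro chi_incomp_le)
  also have "\<dots> \<le> int (card S0)"
    using aff_dim_le_card[OF \<open>finite S0\<close>] by simp
  finally show ?thesis
    using card_S0 by simp
qed

end
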